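(* There is a quantum communication protocol of cost $O(\log N)$ in the one-clean-qubit model for the $\mathsf{ABCD}$ problem on $N\times N$ matrices such that every \textsc{yes} instance is accepted (output 1) with probability at least $0.95$ and every \textsc{no} instance is accepted with probability at most $0.55$.
   Context: Throughout, $N=2^n$ for a positive integer $n$, and $\mathsf{SU}(N)$ denotes the group of $N\times N$ complex unitary matrices of determinant $1$. The $\mathsf{ABCD}$ problem: Alice is given $A,C\in\mathsf{SU}(N)$ explicitly and Bob is given $B,D\in\mathsf{SU}(N)$ explicitly; they must output $1$ (a \textsc{yes} instance) if $\mathrm{Tr}(ABCD)\ge 0.9N$ and $0$ (a \textsc{no} instance) if $\mathrm{Tr}(ABCD)\le 0.1N$, promised that one of these holds. One-clean-qubit (more generally $k$-clean-qubit) model of communication: the initial joint state consists of $k$ qubits in the state $\lvert 0\rangle$ ($k=1$ here) together with $m$ qubits, unentangled from these, in the maximally mixed state; the players have no other private memory. The players take turns applying unitary operators (depending on their own inputs) to all $m+k$ qubits and sending all of them to the other player. At the end an arbitrary projective measurement independent of the inputs is performed and its outcome is the output. The cost of the protocol is the number of rounds times $(m+k)$. *)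

theory Defs
  imports Complex_Main "Jordan_Normal_Form.Schur_Decomposition" "Jordan_Normal_Form.Determinant"
begin

definition mtrace :: "complex mat \<Rightarrow> complex" where
  "mtrace M = (\<Sum>i<dim_row M. M $$ (i,i))"

definition unitary_mat :: "nat \<Rightarrow> complex mat \<Rightarrow> bool" where
  "unitary_mat d U \<longleftrightarrow> U \<in> carrier_mat d d \<and> U * mat_adjoint U = 1\<^sub>m d"

definition SU :: "nat \<Rightarrow> complex mat set" where
  "SU d = {U. unitary_mat d U \<and> det U = 1}"

text \<open>Orthogonal projector on a d-dimensional space (the accepting projector of a
  two-outcome projective measurement).\<close>
definition projector_mat :: "nat \<Rightarrow> complex mat \<Rightarrow> bool" where
  "projector_mat d P \<longleftrightarrow> P \<in> carrier_mat d d \<and> P * P = P \<and> mat_adjoint P = P"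

text \<open>Register of k+m qubits; basis index i < 2^(k+m), the clean qubits are the most
  significant ones.  Initial state: clean qubits in |0>, the other m qubits maximally mixed,
  i.e. the density matrix |0..0><0..0| (x) I/2^m.\<close>
definition init_state :: "nat \<Rightarrow> nat \<Rightarrow> complex mat" where
  "init_state k m = mat (2^(k+m)) (2^(k+m))
      (\<lambda>(i,j). if i = j \<and> i < 2^m then 1 / of_nat (2^m) else 0)"

fun protocol_unitary ::
  "(nat \<Rightarrow> complex mat \<Rightarrow> complex mat \<Rightarrow> complex mat) \<Rightarrow>
   (nat \<Rightarrow> complex mat \<Rightarrow> complex mat \<Rightarrow> complex mat) \<Rightarrow>
   nat \<Rightarrow> nat \<Rightarrow> complex mat \<Rightarrow> complex mat \<Rightarrow> complex mat \<Rightarrow> complex mat \<Rightarrow> complex mat" where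
  "protocol_unitary Ua Ub d 0 A B C D = 1\<^sub>m d"
| "protocol_unitary Ua Ub d (Suc j) A B C D =
     (if even j then Ua j A C else Ub j B D) * protocol_unitary Ua Ub d j A B C D"

definition accept_prob ::
  "nat \<Rightarrow> nat \<Rightarrow> nat \<Rightarrow> (nat \<Rightarrow> complex mat \<Rightarrow> complex mat \<Rightarrow> complex mat) \<Rightarrow>
   (nat \<Rightarrow> complex mat \<Rightarrow> complex mat \<Rightarrow> complex mat) \<Rightarrow> complex mat \<Rightarrow>
   complex mat \<Rightarrow> complex mat \<Rightarrow> complex mat \<Rightarrow> complex mat \<Rightarrow> real" where
  "accept_prob k m r Ua Ub P A B C D =
     (let U = protocol_unitary Ua Ub (2^(k+m)) r A B C D
      in Re (mtrace (P * U * init_state k m * mat_adjoint U)))"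

definition valid_protocol ::
  "nat \<Rightarrow> nat \<Rightarrow> nat \<Rightarrow> nat \<Rightarrow> (nat \<Rightarrow> complex mat \<Rightarrow> complex mat \<Rightarrow> complex mat) \<Rightarrow>
   (nat \<Rightarrow> complex mat \<Rightarrow> complex mat \<Rightarrow> complex mat) \<Rightarrow> complex mat \<Rightarrow> bool" where
  "valid_protocol N k m r Ua Ub P \<longleftrightarrow>
     (\<forall>j<r. \<forall>X\<in>SU N. \<forall>Y\<in>SU N. unitary_mat (2^(k+m)) (Ua j X Y) \<and> unitary_mat (2^(k+m)) (Ub j X Y))
     \<and> projector_mat (2^(k+m)) P"

definition protocol_cost :: "nat \<Rightarrow> nat \<Rightarrow> nat \<Rightarrow> nat" where
  "protocol_cost k m r = r * (m + k)"

end

theory Submission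
  imports Defs
begin

text \<open>The protocol is the Hadamard test for the product ABCD.  Alice puts the clean qubit into the
  state |+> with a Hadamard gate; then Bob, Alice, Bob, Alice apply D, C, B, A to the mixed register,
  controlled by the clean qubit.  The joint unitary is therefore (controlled ABCD) after H, and
  measuring the clean qubit in the basis {|+>, |->} yields + with probability
  1/2 + Re Tr(ABCD) / (2N).  With n mixed qubits and 5 rounds the cost is 5(n + 1) \<le> 10 log N.
  Gates acting on the clean qubit alone are the block matrices (a b; c d) \<otimes> 1, since
  the clean qubit is the most significant one.\<close>

lemma dim_row_mat_adjoint [simp]: "dim_row (mat_adjoint A) = dim_col A"
  and dim_col_mat_adjoint [simp]: "dim_col (mat_adjoint A) = dim_row A"
  unfolding mat_adjoint_def by simp_all

lemma index_mat_adjoint [simp]: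
  "i < dim_col A \<Longrightarrow> j < dim_row A \<Longrightarrow> mat_adjoint A $$ (i, j) = conjugate (A $$ (j, i))"
  unfolding mat_adjoint_def by (simp add: mat_of_rows_index)

lemma carrier_mat_adjoint [simp]: "A \<in> carrier_mat n m \<Longrightarrow> mat_adjoint A \<in> carrier_mat m n"
  by (auto intro: carrier_matI)

lemma mat_adjoint_one [simp]: "mat_adjoint (1\<^sub>m n :: complex mat) = 1\<^sub>m n"
  by (rule eq_matI) auto

lemma mat_adjoint_mult:
  fixes A :: "'a :: conjugatable_field mat"
  assumes "A \<in> carrier_mat n k" "B \<in> carrier_mat k m"
  shows "mat_adjoint (A * B) = mat_adjoint B * mat_adjoint A"
  using assms
  by (intro eq_matI) (auto simp: scalar_prod_def sum_conjugate conjugate_dist_mul mult.commute)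

lemma mat_adjoint_four_block_mat:
  assumes "A \<in> carrier_mat n n" "B \<in> carrier_mat n m" "C \<in> carrier_mat m n" "D \<in> carrier_mat m m"
  shows "mat_adjoint (four_block_mat A B C D) =
    four_block_mat (mat_adjoint A) (mat_adjoint C) (mat_adjoint B) (mat_adjoint D)"
  using assms by (intro eq_matI) auto

lemma mtrace_four_block_mat:
  assumes "A \<in> carrier_mat n n" "D \<in> carrier_mat m m"
  shows "mtrace (four_block_mat A B C D) = mtrace A + mtrace D"
proof -
  have "(\<Sum>i<n + m. f i) = (\<Sum>i<n. f i) + (\<Sum>i<m. f (n + i))" for f :: "nat \<Rightarrow> complex"
    by (induction m) (simp_all add: add.assoc)
  then show ?thesis
    using assms by (simp add: mtrace_def)
qed

lemma mtrace_add:
  "A \<in> carrier_mat n n \<Longrightarrow> B \<in> carrier_mat n n \<Longrightarrow> mtrace (A + B) = mtrace A + mtrace B"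
  by (simp add: mtrace_def sum.distrib)

lemma mtrace_smult: "A \<in> carrier_mat n n \<Longrightarrow> mtrace (c \<cdot>\<^sub>m A) = c * mtrace A"
  by (simp add: mtrace_def sum_distrib_left)

lemma mtrace_one: "mtrace (1\<^sub>m n) = of_nat n"
  by (simp add: mtrace_def)

lemma mtrace_adjoint: "A \<in> carrier_mat n n \<Longrightarrow> mtrace (mat_adjoint A) = cnj (mtrace A)"
  by (simp add: mtrace_def)

lemma unitary_mat_mult:
  assumes "unitary_mat n A" "unitary_mat n B"
  shows "unitary_mat n (A * B)"
proof -
  have A: "A \<in> carrier_mat n n" and B: "B \<in> carrier_mat n n"
    using assms unfolding unitary_mat_def by auto
  have "A * B * mat_adjoint (A * B) = A * (B * mat_adjoint B) * mat_adjoint A"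
    using A B by (simp add: mat_adjoint_mult assoc_mult_mat[of _ n n _ n _ n] mult_carrier_mat[of _ n n])
  also have "\<dots> = 1\<^sub>m n"
    using assms A unfolding unitary_mat_def by simp
  finally show ?thesis
    using A B unfolding unitary_mat_def by simp
qed

lemma smult_one_mult_mat:
  "B \<in> carrier_mat n k \<Longrightarrow> (a \<cdot>\<^sub>m 1\<^sub>m n) * B = a \<cdot>\<^sub>m (B :: 'a :: comm_ring_1 mat)"
  by (simp add: mult_smult_assoc_mat[of _ n n])

lemma mult_smult_one_mat:
  "B \<in> carrier_mat k n \<Longrightarrow> B * (a \<cdot>\<^sub>m 1\<^sub>m n) = a \<cdot>\<^sub>m (B :: 'a :: comm_ring_1 mat)"
  by (simp add: mult_smult_distrib[of _ k n _ n])

definition scalar_block_mat :: "nat \<Rightarrow> 'a \<Rightarrow> 'a \<Rightarrow> 'a \<Rightarrow> 'a \<Rightarrow> 'a :: comm_ring_1 mat" where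
  "scalar_block_mat N a b c d =
     four_block_mat (a \<cdot>\<^sub>m 1\<^sub>m N) (b \<cdot>\<^sub>m 1\<^sub>m N) (c \<cdot>\<^sub>m 1\<^sub>m N) (d \<cdot>\<^sub>m 1\<^sub>m N)"

lemma scalar_block_mat_carrier [simp]: "scalar_block_mat N a b c d \<in> carrier_mat (N + N) (N + N)"
  unfolding scalar_block_mat_def by simp

lemma scalar_block_mat_mult:
  "scalar_block_mat N a b c d * scalar_block_mat N e f g h =
     scalar_block_mat N (a * e + b * g) (a * f + b * h) (c * e + d * g) (c * f + d * h)"
  unfolding scalar_block_mat_def
  by (subst mult_four_block_mat[of _ N N _ N _ N _ _ N _ N])
    (auto simp: smult_one_mult_mat intro!: cong_four_block_mat)

lemma scalar_block_mat_one: "scalar_block_mat N 1 0 0 1 = 1\<^sub>m (N + N)"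
  unfolding scalar_block_mat_def by (rule eq_matI) auto

lemma mat_adjoint_scalar_block_mat:
  "mat_adjoint (scalar_block_mat N a b c d) =
     scalar_block_mat N (conjugate a) (conjugate c) (conjugate b) (conjugate d)"
  unfolding scalar_block_mat_def
  by (subst mat_adjoint_four_block_mat[of _ N]) (auto intro!: cong_four_block_mat)

lemma mtrace_scalar_block_mat_mult:
  assumes "E \<in> carrier_mat N N" "F \<in> carrier_mat N N" "G \<in> carrier_mat N N" "H \<in> carrier_mat N N"
  shows "mtrace (scalar_block_mat N a b c d * four_block_mat E F G H) =
    a * mtrace E + b * mtrace G + c * mtrace F + d * mtrace H"
  using assms unfolding scalar_block_mat_def
  by (simp add: mult_four_block_mat[of _ N N _ N _ N _ _ N _ N] smult_one_mult_mat
      mtrace_four_block_mat[of _ N _ N] mtrace_add[of _ N] mtrace_smult[of _ N])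

definition controlled_mat :: "nat \<Rightarrow> 'a :: zero_neq_one mat \<Rightarrow> 'a mat" where
  "controlled_mat N V = four_block_mat (1\<^sub>m N) (0\<^sub>m N N) (0\<^sub>m N N) V"

lemma controlled_mat_carrier [simp]:
  "V \<in> carrier_mat N N \<Longrightarrow> controlled_mat N V \<in> carrier_mat (N + N) (N + N)"
  unfolding controlled_mat_def by simp

lemma controlled_mat_mult:
  "X \<in> carrier_mat N N \<Longrightarrow> Y \<in> carrier_mat N N \<Longrightarrow>
    controlled_mat N X * controlled_mat N (Y :: 'a :: semiring_1 mat) = controlled_mat N (X * Y)"
  unfolding controlled_mat_def by (simp add: mult_four_block_mat[of _ N N _ N _ N _ _ N _ N])

lemma mat_adjoint_controlled_mat:
  "V \<in> carrier_mat N N \<Longrightarrow>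
    mat_adjoint (controlled_mat N (V :: complex mat)) = controlled_mat N (mat_adjoint V)"
  unfolding controlled_mat_def by (subst mat_adjoint_four_block_mat[of _ N]) (auto intro!: cong_four_block_mat)

lemma unitary_controlled_mat: "unitary_mat N V \<Longrightarrow> unitary_mat (N + N) (controlled_mat N V)"
  unfolding unitary_mat_def
  by (auto simp: mat_adjoint_controlled_mat controlled_mat_mult) (simp add: controlled_mat_def)

lemma controlled_mat_conj_scalar_block_mat:
  assumes "unitary_mat N V"
  shows "controlled_mat N V * scalar_block_mat N a b c d * mat_adjoint (controlled_mat N V) =
    four_block_mat (a \<cdot>\<^sub>m 1\<^sub>m N) (b \<cdot>\<^sub>m mat_adjoint V) (c \<cdot>\<^sub>m V) (d \<cdot>\<^sub>m 1\<^sub>m N)"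
proof -
  have V: "V \<in> carrier_mat N N" and VV: "V * mat_adjoint V = 1\<^sub>m N"
    using assms unfolding unitary_mat_def by auto
  have V': "mat_adjoint V \<in> carrier_mat N N"
    using V by simp
  show ?thesis
    using V V' VV
    unfolding mat_adjoint_controlled_mat[OF V]
    unfolding controlled_mat_def scalar_block_mat_def
    by (simp add: mult_four_block_mat[of _ N N _ N _ N _ _ N _ N] smult_one_mult_mat[of _ N N]
        mult_smult_one_mat mult_smult_assoc_mat[of _ N N _ N])
qed

definition hadamard_mat :: "nat \<Rightarrow> complex mat" where
  "hadamard_mat N = (let h = complex_of_real (1 / sqrt 2) in scalar_block_mat N h h h (- h))"

definition plus_proj :: "nat \<Rightarrow> complex mat" where
  "plus_proj N = scalar_block_mat N (1 / 2) (1 / 2) (1 / 2) (1 / 2)"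

lemma hadamard_mat_carrier [simp]: "hadamard_mat N \<in> carrier_mat (N + N) (N + N)"
  by (simp add: hadamard_mat_def Let_def)

lemma mat_adjoint_hadamard_mat: "mat_adjoint (hadamard_mat N) = hadamard_mat N"
  by (simp add: hadamard_mat_def Let_def mat_adjoint_scalar_block_mat)

lemma unitary_hadamard_mat: "unitary_mat (N + N) (hadamard_mat N)"
  unfolding unitary_mat_def mat_adjoint_hadamard_mat
  by (simp add: hadamard_mat_def Let_def scalar_block_mat_mult flip: scalar_block_mat_one of_real_mult)

lemma projector_plus_proj: "projector_mat (N + N) (plus_proj N)"
  unfolding projector_mat_def plus_proj_def
  by (simp add: scalar_block_mat_mult mat_adjoint_scalar_block_mat)

lemma hadamard_mat_conj_clean_state:
  "hadamard_mat N * scalar_block_mat N q 0 0 0 * mat_adjoint (hadamard_mat N) =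
    scalar_block_mat N (q / 2) (q / 2) (q / 2) (q / 2)"
  unfolding mat_adjoint_hadamard_mat
  by (simp add: hadamard_mat_def Let_def scalar_block_mat_mult flip: of_real_mult)

lemma hadamard_test:
  assumes "unitary_mat N V"
  defines "U \<equiv> controlled_mat N V * hadamard_mat N"
  shows "Re (mtrace (plus_proj N * U * scalar_block_mat N (of_real q) 0 0 0 * mat_adjoint U)) =
    q * (real N + Re (mtrace V)) / 2"
proof -
  have V: "V \<in> carrier_mat N N"
    using assms unfolding unitary_mat_def by simp
  let ?W = "controlled_mat N V" and ?H = "hadamard_mat N" and ?q = "complex_of_real q"
  have "plus_proj N * U * scalar_block_mat N ?q 0 0 0 * mat_adjoint U =
      plus_proj N * (?W * (?H * scalar_block_mat N ?q 0 0 0 * mat_adjoint ?H) * mat_adjoint ?W)"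
    using V unfolding U_def plus_proj_def
    by (simp add: mat_adjoint_mult[of _ "N + N" "N + N" _ "N + N"] mult_carrier_mat[of _ "N + N" "N + N"]
        assoc_mult_mat[of _ "N + N" "N + N" _ "N + N" _ "N + N"])
  also have "\<dots> = plus_proj N * four_block_mat ((?q / 2) \<cdot>\<^sub>m 1\<^sub>m N) ((?q / 2) \<cdot>\<^sub>m mat_adjoint V)
      ((?q / 2) \<cdot>\<^sub>m V) ((?q / 2) \<cdot>\<^sub>m 1\<^sub>m N)"
    unfolding hadamard_mat_conj_clean_state controlled_mat_conj_scalar_block_mat[OF assms(1)] ..
  finally have "mtrace (plus_proj N * U * scalar_block_mat N ?q 0 0 0 * mat_adjoint U) =
      ?q / 4 * (2 * of_nat N + mtrace V + cnj (mtrace V))"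
    using V unfolding plus_proj_def
    by (simp add: mtrace_scalar_block_mat_mult mtrace_smult[of _ N] mtrace_one mtrace_adjoint[of _ N]
        algebra_simps)
  also have "\<dots> = of_real (q * (real N + Re (mtrace V)) / 2)"
    by (simp add: complex_eq_iff field_simps)
  finally show ?thesis
    by (simp only: Re_complex_of_real)
qed

definition abcd_alice :: "nat \<Rightarrow> nat \<Rightarrow> complex mat \<Rightarrow> complex mat \<Rightarrow> complex mat" where
  "abcd_alice N j A C =
     (if j = 0 then hadamard_mat N else if j = 2 then controlled_mat N C else controlled_mat N A)"

definition abcd_bob :: "nat \<Rightarrow> nat \<Rightarrow> complex mat \<Rightarrow> complex mat \<Rightarrow> complex mat" where
  "abcd_bob N j B D = (if j = 1 then controlled_mat N D else controlled_mat N B)"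

lemma protocol_unitary_abcd:
  assumes "A \<in> carrier_mat N N" "B \<in> carrier_mat N N" "C \<in> carrier_mat N N" "D \<in> carrier_mat N N"
  shows "protocol_unitary (abcd_alice N) (abcd_bob N) (N + N) 5 A B C D =
    controlled_mat N (A * B * C * D) * hadamard_mat N"
proof -
  have five: "(5::nat) = Suc (Suc (Suc (Suc (Suc 0))))"
    by simp
  have "protocol_unitary (abcd_alice N) (abcd_bob N) (N + N) 5 A B C D =
      controlled_mat N A *
        (controlled_mat N B * (controlled_mat N C * (controlled_mat N D * hadamard_mat N)))"
    unfolding five
    by (simp add: abcd_alice_def abcd_bob_def right_mult_one_mat[OF hadamard_mat_carrier])
  also have "\<dots> = controlled_mat N (A * B * C * D) * hadamard_mat N"
    using assms
    by (simp add: controlled_mat_mult[symmetric] mult_carrier_mat[of _ N N]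
        mult_carrier_mat[of _ "N + N" "N + N"] assoc_mult_mat[of _ "N + N" "N + N" _ "N + N" _ "N + N"])
  finally show ?thesis .
qed

lemma init_state_one_clean_qubit:
  "init_state 1 n = scalar_block_mat (2 ^ n) (complex_of_real (1 / 2 ^ n)) 0 0 0"
  unfolding init_state_def scalar_block_mat_def by (rule eq_matI) auto

lemma unitary_mat_SU: "U \<in> SU N \<Longrightarrow> unitary_mat N U"
  unfolding SU_def by simp

lemma accept_prob_abcd:
  assumes "A \<in> SU (2 ^ n)" "B \<in> SU (2 ^ n)" "C \<in> SU (2 ^ n)" "D \<in> SU (2 ^ n)"
  shows "accept_prob 1 n 5 (abcd_alice (2 ^ n)) (abcd_bob (2 ^ n)) (plus_proj (2 ^ n)) A B C D =
    1 / 2 + Re (mtrace (A * B * C * D)) / (2 * 2 ^ n)"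
proof -
  define N :: nat where "N = 2 ^ n"
  have unitary: "unitary_mat N A" "unitary_mat N B" "unitary_mat N C" "unitary_mat N D"
    using assms unitary_mat_SU unfolding N_def by blast+
  have "2 ^ (1 + n) = N + N"
    unfolding N_def by simp
  then have "protocol_unitary (abcd_alice N) (abcd_bob N) (2 ^ (1 + n)) 5 A B C D =
      controlled_mat N (A * B * C * D) * hadamard_mat N"
    using unitary unfolding unitary_mat_def by (simp add: protocol_unitary_abcd)
  moreover have "unitary_mat N (A * B * C * D)"
    using unitary by (simp add: unitary_mat_mult)
  ultimately have "accept_prob 1 n 5 (abcd_alice N) (abcd_bob N) (plus_proj N) A B C D =
      1 / 2 ^ n * (real N + Re (mtrace (A * B * C * D))) / 2"
    unfolding accept_prob_def init_state_one_clean_qubit Let_def N_def by (simp only: hadamard_test)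
  then show ?thesis
    unfolding N_def by (simp add: field_simps)
qed

lemma valid_protocol_abcd:
  "valid_protocol (2 ^ n) 1 n 5 (abcd_alice (2 ^ n)) (abcd_bob (2 ^ n)) (plus_proj (2 ^ n))"
  unfolding valid_protocol_def abcd_alice_def abcd_bob_def
  using unitary_mat_SU unitary_controlled_mat unitary_hadamard_mat projector_plus_proj
  by (simp flip: mult_2)

theorem theorem4p1:
  "\<exists>c::real. \<forall>n::nat. n \<ge> 1 \<longrightarrow>
     (\<exists>m r Ua Ub P.
        valid_protocol (2^n) 1 m r Ua Ub P \<and>
        real (protocol_cost 1 m r) \<le> c * log 2 (real (2^n)) \<and>
        (\<forall>A\<in>SU (2^n). \<forall>B\<in>SU (2^n). \<forall>C\<in>SU (2^n). \<forall>D\<in>SU (2^n).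
           (Re (mtrace (A * B * C * D)) \<ge> 0.9 * real (2^n) \<longrightarrow>
              accept_prob 1 m r Ua Ub P A B C D \<ge> 0.95) \<and>
           (Re (mtrace (A * B * C * D)) \<le> 0.1 * real (2^n) \<longrightarrow>
              accept_prob 1 m r Ua Ub P A B C D \<le> 0.55)))"
proof (rule exI[of _ 10], intro allI impI)
  fix n :: nat
  assume "n \<ge> 1"
  then have "real (protocol_cost 1 n 5) \<le> 10 * log 2 (real (2 ^ n))"
    by (simp add: protocol_cost_def log_nat_power)
  moreover have
    "(Re (mtrace (A * B * C * D)) \<ge> 0.9 * real (2 ^ n) \<longrightarrow>
        accept_prob 1 n 5 (abcd_alice (2 ^ n)) (abcd_bob (2 ^ n)) (plus_proj (2 ^ n)) A B C D \<ge> 0.95) \<and>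
     (Re (mtrace (A * B * C * D)) \<le> 0.1 * real (2 ^ n) \<longrightarrow>
        accept_prob 1 n 5 (abcd_alice (2 ^ n)) (abcd_bob (2 ^ n)) (plus_proj (2 ^ n)) A B C D \<le> 0.55)"
    if "A \<in> SU (2 ^ n)" "B \<in> SU (2 ^ n)" "C \<in> SU (2 ^ n)" "D \<in> SU (2 ^ n)" for A B C D
    unfolding accept_prob_abcd[OF that] by (simp add: field_simps)
  ultimately show "\<exists>m r Ua Ub P.
        valid_protocol (2^n) 1 m r Ua Ub P \<and>
        real (protocol_cost 1 m r) \<le> 10 * log 2 (real (2^n)) \<and>
        (\<forall>A\<in>SU (2^n). \<forall>B\<in>SU (2^n). \<forall>C\<in>SU (2^n). \<forall>D\<in>SU (2^n).
           (Re (mtrace (A * B * C * D)) \<ge> 0.9 * real (2^n) \<longrightarrow>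
              accept_prob 1 m r Ua Ub P A B C D \<ge> 0.95) \<and>
           (Re (mtrace (A * B * C * D)) \<le> 0.1 * real (2^n) \<longrightarrow>
              accept_prob 1 m r Ua Ub P A B C D \<le> 0.55))"
    using valid_protocol_abcd by blast
qed

end
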